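(* Let $K$ be an $N$-vertex $q$-edge-colored ordered complete graph. Then there is a $q$-edge-colored ordered complete graph $\widetilde K$ on $N^q$ vertices such that $\ell_i(\widetilde K)=\Pi(K)$ for all $i\in[q]$.
   Context: An ordered complete graph is a complete graph with a linear order on its vertices; colors are from $[q]$. A path $v_1,\dots,v_L$ is monotone if $v_1<\dots<v_L$; its length is its number of vertices. For a color $i\in[q]$, $\ell_i(K)$ is the length of the longest monotone path in $K$ none of whose edges has color $i$, and $\Pi(K)=\prod_{i=1}^q\ell_i(K)$. *)

theory Defs
  imports Main
begin

text \<open>An N-vertex ordered complete graph has vertex set {0..<N} with the natural order.
  A q-edge-colouring assigns to every edge {u,v} with u < v a colour c u v in {1..q};
  values of c for other arguments are irrelevant.\<close>

definition colouring :: "nat \<Rightarrow> nat \<Rightarrow> (nat \<Rightarrow> nat \<Rightarrow> nat) \<Rightarrow> bool" where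
  "colouring N q c \<longleftrightarrow> (\<forall>u v. u < v \<and> v < N \<longrightarrow> c u v \<in> {1..q})"

text \<open>Monotone path: strictly increasing list of vertices; its length is its number of vertices.\<close>
definition monotone_path :: "nat \<Rightarrow> nat list \<Rightarrow> bool" where
  "monotone_path N vs \<longleftrightarrow> sorted_wrt (<) vs \<and> set vs \<subseteq> {..<N}"

definition avoids_colour :: "(nat \<Rightarrow> nat \<Rightarrow> nat) \<Rightarrow> nat \<Rightarrow> nat list \<Rightarrow> bool" where
  "avoids_colour c i vs \<longleftrightarrow> (\<forall>j. Suc j < length vs \<longrightarrow> c (vs ! j) (vs ! Suc j) \<noteq> i)"

definition ell :: "nat \<Rightarrow> (nat \<Rightarrow> nat \<Rightarrow> nat) \<Rightarrow> nat \<Rightarrow> nat" where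
  "ell N c i = Max {length vs | vs. monotone_path N vs \<and> avoids_colour c i vs}"

definition Pi_ell :: "nat \<Rightarrow> nat \<Rightarrow> (nat \<Rightarrow> nat \<Rightarrow> nat) \<Rightarrow> nat" where
  "Pi_ell N q c = (\<Prod>i\<in>{1..q}. ell N c i)"

end

(* A monotone path avoiding colour i in the lexicographic product of two coloured ordered
   complete graphs runs through a monotone i-avoiding sequence of blocks of the first factor and,
   inside each block, along a monotone i-avoiding path of the second one; so its length is at most
   the product of the two values of l_i.  Substituting a longest i-avoiding path of the second
   factor for every vertex of a longest one of the first attains this bound, hence l_i is
   multiplicative.  In the product of the q copies of K whose colours are cyclically rotated by
   0, ..., q - 1, a colour i of the product is every colour of K in exactly one factor, so l_i of
   the product is Pi(K). *)

theory Submission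
  imports Defs "HOL-Number_Theory.Cong"
begin

lemma monotone_path_Nil [simp]: "monotone_path N []"
  by (simp add: monotone_path_def)

lemma monotone_path_Cons:
  "monotone_path N (u # vs) \<longleftrightarrow> u < N \<and> (\<forall>v\<in>set vs. u < v) \<and> monotone_path N vs"
  by (auto simp: monotone_path_def)

lemma monotone_path_length_le: "monotone_path N vs \<Longrightarrow> length vs \<le> N"
  unfolding monotone_path_def
  by (metis card_lessThan card_mono distinct_card finite_lessThan strict_sorted_iff)

lemma finite_monotone_paths: "finite {vs. monotone_path N vs}"
proof (rule finite_subset)
  show "{vs. monotone_path N vs} \<subseteq> {vs. set vs \<subseteq> {..<N} \<and> length vs \<le> N}"
    using monotone_path_length_le by (auto simp: monotone_path_def)
  show "finite {vs. set vs \<subseteq> {..<N} \<and> length vs \<le> N}"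
    by (rule finite_lists_length_le) auto
qed

lemma avoids_colour_Nil [simp]: "avoids_colour c i []"
  and avoids_colour_singleton [simp]: "avoids_colour c i [u]"
  by (simp_all add: avoids_colour_def)

lemma avoids_colour_Cons_Cons:
  "avoids_colour c i (u # v # vs) \<longleftrightarrow> c u v \<noteq> i \<and> avoids_colour c i (v # vs)"
  unfolding avoids_colour_def by (auto simp: less_Suc_eq_0_disj)

lemma avoids_colour_append:
  assumes "xs \<noteq> []" "ys \<noteq> []"
  shows "avoids_colour c i (xs @ ys) \<longleftrightarrow>
    avoids_colour c i xs \<and> avoids_colour c i ys \<and> c (last xs) (hd ys) \<noteq> i"
  using assms
proof (induction xs rule: induct_list012)
  case (2 u)
  then show ?case by (cases ys) (auto simp: avoids_colour_Cons_Cons)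
next
  case (3 u v xs)
  then show ?case by (auto simp: avoids_colour_Cons_Cons)
qed simp

lemma colouring_path_edge:
  assumes "colouring N q c" "monotone_path N vs" "Suc j < length vs"
  shows "c (vs ! j) (vs ! Suc j) \<in> {1..q}"
proof -
  have "vs ! j < vs ! Suc j"
    using assms(2,3) by (auto simp: monotone_path_def sorted_wrt_nth_less)
  moreover have "vs ! Suc j < N"
    using assms(2,3) nth_mem by (fastforce simp: monotone_path_def)
  ultimately show ?thesis
    using assms(1) by (simp add: colouring_def)
qed

lemma finite_ell_lengths:
  "finite {length vs | vs. monotone_path N vs \<and> avoids_colour c i vs}"
  by (rule finite_image_set) (rule finite_subset[OF _ finite_monotone_paths], blast)

lemma length_le_ell:
  "monotone_path N vs \<Longrightarrow> avoids_colour c i vs \<Longrightarrow> length vs \<le> ell N c i"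
  unfolding ell_def by (rule Max_ge[OF finite_ell_lengths]) blast

lemma ell_witness:
  obtains vs where "monotone_path N vs" "avoids_colour c i vs" "length vs = ell N c i"
proof -
  have "ell N c i \<in> {length vs | vs. monotone_path N vs \<and> avoids_colour c i vs}"
    unfolding ell_def
    by (rule Max_in[OF finite_ell_lengths]) (use monotone_path_Nil avoids_colour_Nil in blast)
  then show ?thesis using that by force
qed

lemma ell_0: "ell 0 c i = 0"
  by (metis ell_witness le_zero_eq monotone_path_length_le)

lemma ell_pos: "0 < N \<Longrightarrow> 0 < ell N c i"
  using length_le_ell[of N "[0]" c i] by (simp add: monotone_path_Cons)

lemma ell_1: "ell 1 c i = 1"
  by (metis ell_pos ell_witness le_antisym less_one monotone_path_length_le not_le)

definition ell_from :: "nat \<Rightarrow> (nat \<Rightarrow> nat \<Rightarrow> nat) \<Rightarrow> nat \<Rightarrow> nat \<Rightarrow> nat" where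
  "ell_from N c i u =
    Max {Suc (length vs) | vs. monotone_path N (u # vs) \<and> avoids_colour c i (u # vs)}"

lemma finite_ell_from_lengths:
  "finite {Suc (length vs) | vs. monotone_path N (u # vs) \<and> avoids_colour c i (u # vs)}"
  by (rule finite_image_set)
    (rule finite_subset[OF _ finite_monotone_paths], auto simp: monotone_path_Cons)

lemma length_le_ell_from:
  "monotone_path N (u # vs) \<Longrightarrow> avoids_colour c i (u # vs) \<Longrightarrow> Suc (length vs) \<le> ell_from N c i u"
  unfolding ell_from_def by (rule Max_ge[OF finite_ell_from_lengths]) blast

lemma ell_from_witness:
  assumes "u < N"
  obtains vs where "monotone_path N (u # vs)" "avoids_colour c i (u # vs)"
    "Suc (length vs) = ell_from N c i u"
proof -
  have "monotone_path N [u]" using assms by (simp add: monotone_path_Cons)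
  then have "ell_from N c i u \<in>
      {Suc (length vs) | vs. monotone_path N (u # vs) \<and> avoids_colour c i (u # vs)}"
    unfolding ell_from_def by (intro Max_in[OF finite_ell_from_lengths]) force
  then show ?thesis using that by force
qed

lemma ell_from_pos: "u < N \<Longrightarrow> 0 < ell_from N c i u"
  by (metis ell_from_witness zero_less_Suc)

lemma ell_from_le_ell: "u < N \<Longrightarrow> ell_from N c i u \<le> ell N c i"
  by (metis ell_from_witness length_Cons length_le_ell)

lemma ell_from_step:
  assumes "u < v" "v < N" "c u v \<noteq> i"
  shows "ell_from N c i v < ell_from N c i u"
proof -
  obtain vs where vs: "monotone_path N (v # vs)" "avoids_colour c i (v # vs)"
    "Suc (length vs) = ell_from N c i v"
    using ell_from_witness[OF assms(2)] .
  have "monotone_path N (u # v # vs)"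
    using vs(1) assms(1,2) by (auto simp: monotone_path_Cons)
  moreover have "avoids_colour c i (u # v # vs)"
    using vs(2) assms(3) by (simp add: avoids_colour_Cons_Cons)
  ultimately have "Suc (length (v # vs)) \<le> ell_from N c i u"
    by (rule length_le_ell_from)
  then show ?thesis using vs(3) by simp
qed

(* Vertex x of the product stands for the pair (x div b, x mod b), ordered lexicographically. *)
definition lex_colouring ::
  "nat \<Rightarrow> (nat \<Rightarrow> nat \<Rightarrow> nat) \<Rightarrow> (nat \<Rightarrow> nat \<Rightarrow> nat) \<Rightarrow> nat \<Rightarrow> nat \<Rightarrow> nat" where
  "lex_colouring b cA cB x y =
    (if x div b = y div b then cB (x mod b) (y mod b) else cA (x div b) (y div b))"

lemma lex_colouring_blocks:
  "w < b \<Longrightarrow> w' < b \<Longrightarrow>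
    lex_colouring b cA cB (v * b + w) (v' * b + w') = (if v = v' then cB w w' else cA v v')"
  by (simp add: lex_colouring_def)

lemma mult_add_less_mult:
  assumes "w < b" "v < v'"
  shows "v * b + w < v' * (b::nat)"
proof -
  have "v * b + w < Suc v * b" using assms(1) by simp
  also have "\<dots> \<le> v' * b" using assms(2) by (intro mult_le_mono1) simp
  finally show ?thesis .
qed

lemma div_less_div_if_ne: "(x::nat) < y \<Longrightarrow> x div b \<noteq> y div b \<Longrightarrow> x div b < y div b"
  by (simp add: div_le_mono le_neq_implies_less)

lemma mod_less_mod_if_div_eq: "(x::nat) < y \<Longrightarrow> x div b = y div b \<Longrightarrow> x mod b < y mod b"
  by (metis add_less_cancel_left div_mult_mod_eq)

lemma colouring_lex_colouring:
  assumes "colouring a q cA" "colouring b q cB"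
  shows "colouring (a * b) q (lex_colouring b cA cB)"
  unfolding colouring_def
proof (intro allI impI)
  fix x y assume xy: "x < y \<and> y < a * b"
  then have "0 < b" by (cases "b = 0") auto
  then show "lex_colouring b cA cB x y \<in> {1..q}"
    using assms xy div_less_div_if_ne[of x y b] mod_less_mod_if_div_eq[of x y b]
      less_mult_imp_div_less[of y a b]
    by (auto simp: lex_colouring_def colouring_def)
qed

(* A path from x can still visit at most ell_from a cA i (x div b) - 1 further blocks, each in at
   most ell b cB i vertices, besides ell_from b cB i (x mod b) vertices in its current block. *)
lemma lex_path_length_bound:
  assumes "monotone_path (a * b) (x # vs)" "avoids_colour (lex_colouring b cA cB) i (x # vs)"
  shows "length (x # vs) + ell b cB i \<le>
    ell_from a cA i (x div b) * ell b cB i + ell_from b cB i (x mod b)"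
  using assms
proof (induction vs arbitrary: x)
  case Nil
  then have "x < a * b" by (simp add: monotone_path_Cons)
  moreover from this have "0 < b" by (cases b) auto
  ultimately have "0 < ell_from a cA i (x div b)" "0 < ell_from b cB i (x mod b)"
    by (simp_all add: ell_from_pos less_mult_imp_div_less)
  moreover from this(1) have "ell b cB i \<le> ell_from a cA i (x div b) * ell b cB i"
    by simp
  ultimately show ?case by (simp only: length_Cons list.size(3))
next
  case (Cons y vs)
  let ?L = "ell b cB i"
  have xy: "x < y" "y < a * b" and col: "lex_colouring b cA cB x y \<noteq> i"
    and tail: "monotone_path (a * b) (y # vs)" "avoids_colour (lex_colouring b cA cB) i (y # vs)"
    using Cons.prems by (simp_all add: monotone_path_Cons avoids_colour_Cons_Cons)
  have IH: "length (y # vs) + ?L \<le> ell_from a cA i (y div b) * ?L + ell_from b cB i (y mod b)"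
    using Cons.IH[OF tail] .
  have "0 < b" using xy(2) by (cases "b = 0") simp_all
  then have mods: "x mod b < b" "y mod b < b" by simp_all
  show ?case
  proof (cases "x div b = y div b")
    case True
    then have "x mod b < y mod b" and "cB (x mod b) (y mod b) \<noteq> i"
      using xy(1) col by (simp_all add: mod_less_mod_if_div_eq lex_colouring_def)
    from ell_from_step[where c = cB, OF this(1) mods(2) this(2)] IH True show ?thesis by simp
  next
    case False
    then have "x div b < y div b" and "cA (x div b) (y div b) \<noteq> i"
      using xy(1) col by (simp_all add: div_less_div_if_ne lex_colouring_def)
    moreover have "y div b < a" using xy(2) by (rule less_mult_imp_div_less)
    ultimately have "ell_from a cA i (y div b) < ell_from a cA i (x div b)"
      by (intro ell_from_step)
    then have "Suc (ell_from a cA i (y div b)) * ?L \<le> ell_from a cA i (x div b) * ?L"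
      by (intro mult_le_mono1) simp
    moreover have "ell_from b cB i (y mod b) \<le> ?L" "0 < ell_from b cB i (x mod b)"
      using mods by (simp_all add: ell_from_le_ell ell_from_pos)
    ultimately show ?thesis using IH by simp
  qed
qed

lemma ell_lex_colouring_le: "ell (a * b) (lex_colouring b cA cB) i \<le> ell a cA i * ell b cB i"
proof -
  obtain vs where vs: "monotone_path (a * b) vs" "avoids_colour (lex_colouring b cA cB) i vs"
    "length vs = ell (a * b) (lex_colouring b cA cB) i"
    using ell_witness .
  show ?thesis
  proof (cases vs)
    case Nil
    then show ?thesis using vs(3) by simp
  next
    case (Cons x vs')
    have x: "x < a * b" using vs(1) Cons by (simp add: monotone_path_Cons)
    then have "x div b < a" by (rule less_mult_imp_div_less)
    have "0 < b" using x by (cases "b = 0") simp_all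
    then have "length vs + ell b cB i \<le>
        ell_from a cA i (x div b) * ell b cB i + ell_from b cB i (x mod b)"
      using lex_path_length_bound vs Cons by blast
    also have "\<dots> \<le> ell a cA i * ell b cB i + ell b cB i"
      using \<open>0 < b\<close> \<open>x div b < a\<close>
      by (intro add_mono mult_le_mono1 ell_from_le_ell) simp_all
    finally show ?thesis using vs(3) by simp
  qed
qed

lemma monotone_path_append:
  "monotone_path N (xs @ ys) \<longleftrightarrow>
    monotone_path N xs \<and> monotone_path N ys \<and> (\<forall>x\<in>set xs. \<forall>y\<in>set ys. x < y)"
  by (auto simp: monotone_path_def sorted_wrt_append)

lemma monotone_path_lex_path:
  assumes "monotone_path a pA" "monotone_path b pB"
  shows "monotone_path (a * b) [v * b + w. v \<leftarrow> pA, w \<leftarrow> pB]"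
  using assms(1)
proof (induction pA)
  case (Cons v pA)
  have pB: "sorted_wrt (<) pB" "\<And>w. w \<in> set pB \<Longrightarrow> w < b"
    using assms(2) by (auto simp: monotone_path_def)
  have v: "v < a" "\<And>v'. v' \<in> set pA \<Longrightarrow> v < v'" and "monotone_path a pA"
    using Cons.prems by (simp_all add: monotone_path_Cons)
  have "monotone_path (a * b) (map (\<lambda>w. v * b + w) pB)"
    unfolding monotone_path_def
    using pB mult_add_less_mult[OF _ v(1)] by (auto simp: sorted_wrt_map elim: sorted_wrt_mono_rel[rotated])
  moreover have "v * b + w < v' * b + w'" if "w \<in> set pB" "v' \<in> set pA" for w v' w'
    using mult_add_less_mult[OF pB(2)[OF that(1)] v(2)[OF that(2)]] by simp
  ultimately show ?case
    using Cons.IH[OF \<open>monotone_path a pA\<close>] by (auto simp: monotone_path_append)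
qed simp

lemma avoids_colour_lex_block:
  assumes "monotone_path b pB" "avoids_colour cB i pB"
  shows "avoids_colour (lex_colouring b cA cB) i (map (\<lambda>w. v * b + w) pB)"
  unfolding avoids_colour_def
proof (intro allI impI)
  fix j assume j: "Suc j < length (map (\<lambda>w. v * b + w) pB)"
  then have "pB ! j \<in> set pB" "pB ! Suc j \<in> set pB" by simp_all
  then have "pB ! j < b" "pB ! Suc j < b"
    using assms(1) by (auto simp: monotone_path_def)
  then show "lex_colouring b cA cB (map (\<lambda>w. v * b + w) pB ! j) (map (\<lambda>w. v * b + w) pB ! Suc j) \<noteq> i"
    using assms(2) j by (simp add: lex_colouring_blocks avoids_colour_def)
qed

lemma avoids_colour_lex_path:
  assumes "monotone_path a pA" "avoids_colour cA i pA"
    and "monotone_path b pB" "avoids_colour cB i pB" "pB \<noteq> []"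
  shows "avoids_colour (lex_colouring b cA cB) i [v * b + w. v \<leftarrow> pA, w \<leftarrow> pB]"
  using assms(1,2)
proof (induction pA rule: induct_list012)
  case (2 v)
  then show ?case using avoids_colour_lex_block[OF assms(3,4)] by simp
next
  case (3 v v' pA)
  let ?block = "map (\<lambda>w. v * b + w) pB" and ?rest = "[v * b + w. v \<leftarrow> v' # pA, w \<leftarrow> pB]"
  have "v < v'" "monotone_path a (v' # pA)" and "cA v v' \<noteq> i" "avoids_colour cA i (v' # pA)"
    using "3.prems" by (simp_all add: monotone_path_Cons avoids_colour_Cons_Cons)
  then have rest: "avoids_colour (lex_colouring b cA cB) i ?rest"
    using "3.IH"(2) by blast
  have "last pB < b" "hd pB < b"
    using assms(3,5) last_in_set hd_in_set by (auto simp: monotone_path_def)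
  then have "lex_colouring b cA cB (last ?block) (hd ?rest) = cA v v'"
    using \<open>v < v'\<close> assms(5) by (simp add: last_map hd_map lex_colouring_blocks)
  moreover have "?block \<noteq> []" "?rest \<noteq> []" using assms(5) by simp_all
  ultimately have "avoids_colour (lex_colouring b cA cB) i (?block @ ?rest)"
    using avoids_colour_append avoids_colour_lex_block[OF assms(3,4)] rest \<open>cA v v' \<noteq> i\<close>
    by simp
  then show ?case by simp
qed simp

lemma ell_lex_colouring: "ell (a * b) (lex_colouring b cA cB) i = ell a cA i * ell b cB i"
proof (cases "b = 0")
  case True
  then show ?thesis by (simp add: ell_0)
next
  case False
  obtain pA where pA: "monotone_path a pA" "avoids_colour cA i pA" "length pA = ell a cA i"
    using ell_witness .
  obtain pB where pB: "monotone_path b pB" "avoids_colour cB i pB" "length pB = ell b cB i"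
    using ell_witness .
  have "pB \<noteq> []" using pB(3) ell_pos[of b cB i] False by auto
  have "length [v * b + w. v \<leftarrow> pA, w \<leftarrow> pB] = length pA * length pB"
    by (induction pA) simp_all
  then have "ell a cA i * ell b cB i \<le> ell (a * b) (lex_colouring b cA cB) i"
    using length_le_ell[OF monotone_path_lex_path[OF pA(1) pB(1)]
        avoids_colour_lex_path[OF pA(1,2) pB(1,2) \<open>pB \<noteq> []\<close>]] pA(3) pB(3)
    by simp
  with ell_lex_colouring_le show ?thesis by (rule antisym)
qed

fun lex_product :: "nat \<Rightarrow> (nat \<Rightarrow> nat \<Rightarrow> nat) list \<Rightarrow> nat \<Rightarrow> nat \<Rightarrow> nat" where
  "lex_product N [] = (\<lambda>_ _. 1)"
| "lex_product N (c # cs) = lex_colouring (N ^ length cs) c (lex_product N cs)"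

lemma colouring_lex_product:
  "\<forall>c\<in>set cs. colouring N q c \<Longrightarrow> colouring (N ^ length cs) q (lex_product N cs)"
proof (induction cs)
  case Nil
  then show ?case by (simp add: colouring_def)
next
  case (Cons c cs)
  then show ?case by (simp add: colouring_lex_colouring)
qed

lemma ell_lex_product: "ell (N ^ length cs) (lex_product N cs) i = (\<Prod>c\<leftarrow>cs. ell N c i)"
proof (induction cs)
  case Nil
  then show ?case using ell_1 by simp
next
  case (Cons c cs)
  then show ?case by (simp add: ell_lex_colouring)
qed

lemma ell_relabel:
  assumes "colouring N q c" "inj_on \<sigma> {1..q}" "m \<in> {1..q}"
  shows "ell N (\<lambda>u v. \<sigma> (c u v)) (\<sigma> m) = ell N c m"
proof -
  have "avoids_colour (\<lambda>u v. \<sigma> (c u v)) (\<sigma> m) vs \<longleftrightarrow> avoids_colour c m vs"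
    if path: "monotone_path N vs" for vs
  proof -
    have "\<sigma> (c (vs ! j) (vs ! Suc j)) = \<sigma> m \<longleftrightarrow> c (vs ! j) (vs ! Suc j) = m"
      if "Suc j < length vs" for j
      using inj_on_eq_iff[OF assms(2) colouring_path_edge[OF assms(1) path that] assms(3)] .
    then show ?thesis by (simp add: avoids_colour_def)
  qed
  then show ?thesis
    unfolding ell_def by (intro arg_cong[where f = Max]) blast
qed

definition rotate_colour :: "nat \<Rightarrow> nat \<Rightarrow> nat \<Rightarrow> nat" where
  "rotate_colour q k m = (m - 1 + k) mod q + 1"

lemma rotate_colour_mem: "m \<in> {1..q} \<Longrightarrow> rotate_colour q k m \<in> {1..q}"
  by (simp add: rotate_colour_def Suc_le_eq)

lemma inj_on_rotate_colour: "inj_on (rotate_colour q k) {1..q}"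
proof (rule inj_onI)
  fix m m' assume m: "m \<in> {1..q}" "m' \<in> {1..q}" and "rotate_colour q k m = rotate_colour q k m'"
  then have "[m - 1 + k = m' - 1 + k] (mod q)" by (simp add: rotate_colour_def cong_def)
  then have "m - 1 = m' - 1"
    using m by (intro cong_less_modulus_unique_nat[of _ _ q]) (auto simp: cong_add_rcancel_nat)
  moreover have "1 \<le> m" "1 \<le> m'" using m by simp_all
  ultimately show "m = m'" by arith
qed

lemma rotate_colour_rotate_colour:
  assumes "k \<le> q" "i \<in> {1..q}"
  shows "rotate_colour q (q - k) (rotate_colour q k i) = i"
proof -
  have "rotate_colour q (q - k) (rotate_colour q k i) = ((i - 1 + k) mod q + (q - k)) mod q + 1"
    by (simp add: rotate_colour_def)
  also have "\<dots> = (i - 1 + k + (q - k)) mod q + 1"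
    by (simp only: mod_add_left_eq)
  also have "\<dots> = (i - 1 + q) mod q + 1"
    using assms(1) by simp
  also have "\<dots> = (i - 1) mod q + 1"
    by (simp only: mod_add_self2)
  also have "\<dots> = i"
    using assms(2) by auto
  finally show ?thesis .
qed

lemma ell_rotate_colour:
  assumes "colouring N q c" "k \<le> q" "i \<in> {1..q}"
  shows "ell N (\<lambda>u v. rotate_colour q (q - k) (c u v)) i = ell N c (rotate_colour q k i)"
proof -
  have "ell N (\<lambda>u v. rotate_colour q (q - k) (c u v))
      (rotate_colour q (q - k) (rotate_colour q k i)) = ell N c (rotate_colour q k i)"
    by (rule ell_relabel[OF assms(1) inj_on_rotate_colour rotate_colour_mem[OF assms(3)]])
  then show ?thesis using rotate_colour_rotate_colour[OF assms(2,3)] by simp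
qed

lemma bij_betw_rotate_colour_offset:
  assumes "i \<in> {1..q}"
  shows "bij_betw (\<lambda>k. rotate_colour q k i) {..<q} {1..q}"
proof -
  have inj: "inj_on (\<lambda>k. rotate_colour q k i) {..<q}"
  proof (rule inj_onI)
    fix k k' assume k: "k \<in> {..<q}" "k' \<in> {..<q}" and "rotate_colour q k i = rotate_colour q k' i"
    then have "[i - 1 + k = i - 1 + k'] (mod q)" by (simp add: rotate_colour_def cong_def)
    then show "k = k'"
      using k by (intro cong_less_modulus_unique_nat[of _ _ q]) (auto simp: cong_add_lcancel_nat)
  qed
  moreover have "(\<lambda>k. rotate_colour q k i) ` {..<q} = {1..q}"
    using assms rotate_colour_mem card_image[OF inj]
    by (intro card_subset_eq) auto
  ultimately show ?thesis by (simp add: bij_betw_def)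
qed

theorem proposition3p7:
  fixes N q :: nat and c :: "nat \<Rightarrow> nat \<Rightarrow> nat"
  assumes "colouring N q c"
  shows "\<exists>c'. colouring (N ^ q) q c' \<and> (\<forall>i\<in>{1..q}. ell (N ^ q) c' i = Pi_ell N q c)"
proof -
  \<comment> \<open>Colour i of the k-th factor is colour rotate_colour q k i of K.\<close>
  define cs where "cs = map (\<lambda>k u v. rotate_colour q (q - k) (c u v)) [0..<q]"
  have "colouring N q (\<lambda>u v. rotate_colour q k (c u v))" for k
    using assms rotate_colour_mem unfolding colouring_def by blast
  then have "colouring (N ^ q) q (lex_product N cs)"
    using colouring_lex_product[of cs N q] by (simp add: cs_def)
  moreover have "ell (N ^ q) (lex_product N cs) i = Pi_ell N q c" if i: "i \<in> {1..q}" for i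
  proof -
    have "ell (N ^ q) (lex_product N cs) i =
        (\<Prod>k<q. ell N (\<lambda>u v. rotate_colour q (q - k) (c u v)) i)"
      using ell_lex_product[of N cs i]
      by (simp add: cs_def comp_def prod.distinct_set_conv_list[symmetric] atLeast0LessThan)
    also have "\<dots> = (\<Prod>k<q. ell N c (rotate_colour q k i))"
      using ell_rotate_colour[OF assms _ i] by (intro prod.cong) simp_all
    also have "\<dots> = Pi_ell N q c"
      unfolding Pi_ell_def by (rule prod.reindex_bij_betw[OF bij_betw_rotate_colour_offset[OF i]])
    finally show ?thesis .
  qed
  ultimately show ?thesis by blast
qed

end
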